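(* Let $\psi\in[0,2\pi)$ and let $\kappa\in\mathbb{C}$ with $\operatorname{Im}(\kappa)\neq 0$ satisfy $$\cos(\kappa\cos\psi)+\cos(\kappa\sin\psi)-2=0.$$ Then $$\cos\psi\,\sin(\kappa\cos\psi)+\sin\psi\,\sin(\kappa\sin\psi)\neq 0.$$ *)

theory Defs
  imports Complex_Main
begin

end

theory Submission imports Defs "HOL-Analysis.Analysis" begin

(* Let u = cos psi, w = sin psi and put c = (u + w)/2, d = (u - w)/2, p = kappa c,
   q = kappa d, so that kappa u = p + q and kappa w = p - q.  The sum/difference
   formulas turn the hypothesis cos(kappa u) + cos(kappa w) = 2 into cos p cos q = 1
   and the quantity to be shown nonzero into 2 (c sin p cos q + d cos p sin q).
   Suppose the latter vanishes.  Squaring and eliminating sin p, sin q via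
   sin^2 = 1 - cos^2 and cos q = 1 / cos p gives (P^2 - 1)(d^2 P^2 + c^2) = 0 for
   P = cos p.  If P^2 = 1, then sin p = sin q = 0, so p and q are real; as
   Im kappa <> 0 this forces c = d = 0, impossible since c^2 + d^2 = 1/2.
   Otherwise cos^2 p and cos^2 q are negative reals, whence cos (Re p) = cos (Re q) = 0;
   then the vanishing quantity reduces to a real expression in sinh and cosh whose
   two summands have the same strict sign, a contradiction. *)

lemma Im_eq_0_if_sin_eq_0:
  fixes z :: complex
  assumes "sin z = 0"
  shows "Im z = 0"
  using assms by (auto simp: sin_eq_0)

text \<open>If \<open>cos z\<^sup>2 = 1\<close> then \<open>sin z = 0\<close>, so \<open>z\<close> is real.\<close>

lemma Im_eq_0_if_cos_square_eq_1:
  fixes z :: complex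
  assumes "(cos z)\<^sup>2 = 1"
  shows "Im z = 0"
  using assms sin_squared_eq[of z] by (intro Im_eq_0_if_sin_eq_0) simp

lemma Re_eq_0_if_square_negative_real:
  fixes z :: complex and r :: real
  assumes "z\<^sup>2 = complex_of_real r" and "r < 0"
  shows "Re z = 0"
proof (rule ccontr)
  assume "Re z \<noteq> 0"
  have "2 * Re z * Im z = 0"
    using arg_cong[OF assms(1), of Im] by (auto simp: power2_eq_square)
  with \<open>Re z \<noteq> 0\<close> have "Im z = 0" by simp
  then have "(Re z)\<^sup>2 = r"
    using arg_cong[OF assms(1), of Re] by (simp add: power2_eq_square)
  with \<open>r < 0\<close> show False by (metis zero_le_power2 not_le)
qed

text \<open>Since \<open>Re (cos z) = cos (Re z) cosh (Im z)\<close>, a purely imaginary value of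
  \<open>cos z\<close> forces \<open>cos (Re z) = 0\<close>.\<close>

lemma cos_Re_eq_0_if_cos_square_negative_real:
  fixes z :: complex and r :: real
  assumes "(cos z)\<^sup>2 = complex_of_real r" and "r < 0"
  shows "cos (Re z) = 0"
proof -
  have "Re (cos z) = 0" using assms by (rule Re_eq_0_if_square_negative_real)
  moreover have "exp (Im z) + exp (- Im z) > 0" by (simp add: add_pos_pos)
  ultimately show ?thesis by (simp add: Re_cos)
qed

lemma sin_cos_if_cos_Re_eq_0:
  fixes z :: complex
  assumes "cos (Re z) = 0"
  shows "sin z = complex_of_real (sin (Re z) * cosh (Im z))"
    and "cos z = - \<i> * complex_of_real (sin (Re z) * sinh (Im z))"
  using assms
  by (auto intro!: complex_eqI simp: Re_sin Im_sin Re_cos Im_cos cosh_def sinh_def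
      field_simps)

lemma mult_sinh_pos:
  fixes x :: real
  assumes "x \<noteq> 0"
  shows "x * sinh x > 0"
  using assms by (cases "x > 0") (simp_all add: mult_neg_neg)

text \<open>The sign argument: for nonzero \<open>c, d, v\<close> both summands below have the sign
  of \<open>c d v\<close>, so their sum cannot vanish.\<close>

lemma cosh_sinh_weighted_sum_nonzero:
  fixes c d v :: real
  assumes "c \<noteq> 0" and "d \<noteq> 0" and "v \<noteq> 0"
  shows "c * cosh (c * v) * sinh (d * v) + d * sinh (c * v) * cosh (d * v) \<noteq> 0"
proof
  assume sum_zero: "c * cosh (c * v) * sinh (d * v) + d * sinh (c * v) * cosh (d * v) = 0"
  have "(d * v) * sinh (d * v) > 0" "(c * v) * sinh (c * v) > 0"
    using assms by (simp_all add: mult_sinh_pos)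
  moreover have "cosh (c * v) * c\<^sup>2 > 0" "cosh (d * v) * d\<^sup>2 > 0"
    using assms by simp_all
  ultimately have "cosh (c * v) * c\<^sup>2 * ((d * v) * sinh (d * v))
           + cosh (d * v) * d\<^sup>2 * ((c * v) * sinh (c * v)) > 0"
    by (simp add: add_pos_pos)
  also have "\<dots> = (c * d * v)
      * (c * cosh (c * v) * sinh (d * v) + d * sinh (c * v) * cosh (d * v))"
    by (simp add: power2_eq_square algebra_simps)
  finally show False using sum_zero by simp
qed

text \<open>The elimination step: from \<open>S\<^sup>2 = 1 - P\<^sup>2\<close>, \<open>T\<^sup>2 = 1 - Q\<^sup>2\<close>, \<open>P Q = 1\<close> and
  \<open>c S Q + d P T = 0\<close> (with \<open>S, T\<close> playing the roles of the sines and \<open>P, Q\<close>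
  of the cosines) one gets a polynomial equation in \<open>P\<close> alone.\<close>

lemma elimination_identity:
  fixes P Q S T c d :: "'a :: idom"
  assumes "S\<^sup>2 = 1 - P\<^sup>2" and "T\<^sup>2 = 1 - Q\<^sup>2" and "P * Q = 1"
    and "c * S * Q + d * P * T = 0"
  shows "(P\<^sup>2 - 1) * (d\<^sup>2 * P\<^sup>2 + c\<^sup>2) = 0"
  using assms by algebra

text \<open>In the case \<open>d\<^sup>2 cos\<^sup>2 p + c\<^sup>2 = 0\<close> with \<open>c, d \<noteq> 0\<close>: both \<open>cos p\<close> and \<open>cos q\<close>
  have negative real squares, and the sinh/cosh sign argument applies.\<close>

lemma weighted_sum_nonzero_if_cos_squares_negative:
  fixes kappa :: complex and c d :: real
  defines "p \<equiv> kappa * complex_of_real c" and "q \<equiv> kappa * complex_of_real d"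
  assumes "Im kappa \<noteq> 0" and "c \<noteq> 0" and "d \<noteq> 0"
    and cos_p_square: "(cos p)\<^sup>2 = complex_of_real (- (c / d)\<^sup>2)"
    and cos_q_square: "(cos q)\<^sup>2 = complex_of_real (- (d / c)\<^sup>2)"
  shows "complex_of_real c * sin p * cos q + complex_of_real d * cos p * sin q \<noteq> 0"
proof -
  have "(c / d)\<^sup>2 > 0" "(d / c)\<^sup>2 > 0"
    using assms by simp_all
  then have cos_Re: "cos (Re p) = 0" "cos (Re q) = 0"
    by (auto intro: cos_Re_eq_0_if_cos_square_negative_real cos_p_square cos_q_square)
  then have sin_Re: "sin (Re p) \<noteq> 0" "sin (Re q) \<noteq> 0"
    using sin_cos_squared_add[of "Re p"] sin_cos_squared_add[of "Re q"] by auto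
  have Im_pq: "Im p = c * Im kappa" "Im q = d * Im kappa"
    by (simp_all add: p_def q_def)
  have "complex_of_real c * sin p * cos q + complex_of_real d * cos p * sin q
      = - \<i> * complex_of_real (sin (Re p) * sin (Re q)
          * (c * cosh (c * Im kappa) * sinh (d * Im kappa)
           + d * sinh (c * Im kappa) * cosh (d * Im kappa)))"
    using cos_Re by (simp add: sin_cos_if_cos_Re_eq_0 Im_pq algebra_simps)
  moreover have "sin (Re p) * sin (Re q)
          * (c * cosh (c * Im kappa) * sinh (d * Im kappa)
           + d * sinh (c * Im kappa) * cosh (d * Im kappa)) \<noteq> 0"
    using assms sin_Re by (simp add: cosh_sinh_weighted_sum_nonzero)
  ultimately show ?thesis
    by (metis complex_i_not_zero mult_eq_0_iff neg_equal_0_iff_equal of_real_eq_0_iff)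
qed

lemma no_common_solution:
  fixes kappa :: complex and c d :: real
  defines "p \<equiv> kappa * complex_of_real c" and "q \<equiv> kappa * complex_of_real d"
  assumes "Im kappa \<noteq> 0" and "c \<noteq> 0 \<or> d \<noteq> 0"
    and cos_prod: "cos p * cos q = 1"
    and weighted_sum: "complex_of_real c * sin p * cos q + complex_of_real d * cos p * sin q = 0"
  shows False
proof -
  have "((cos p)\<^sup>2 - 1) * ((complex_of_real d)\<^sup>2 * (cos p)\<^sup>2 + (complex_of_real c)\<^sup>2) = 0"
    using sin_squared_eq[of p] sin_squared_eq[of q] cos_prod weighted_sum
    by (intro elimination_identity[where S = "sin p" and T = "sin q" and Q = "cos q"])
      simp_all
  then consider (unit) "(cos p)\<^sup>2 = 1"
    | (quartic) "(complex_of_real d)\<^sup>2 * (cos p)\<^sup>2 + (complex_of_real c)\<^sup>2 = 0"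
    by auto
  then show False
  proof cases
    case unit
    then have "(cos q)\<^sup>2 = 1"
      using cos_prod by (metis power_mult_distrib power_one mult_1)
    with unit have "Im p = 0" "Im q = 0"
      by (simp_all add: Im_eq_0_if_cos_square_eq_1)
    with assms show False by (simp add: p_def q_def)
  next
    case quartic
    have "cos p \<noteq> 0" using cos_prod by auto
    with quartic assms(4) have "c \<noteq> 0" "d \<noteq> 0" by auto
    have "(complex_of_real d)\<^sup>2 + (complex_of_real c)\<^sup>2 * (cos q)\<^sup>2
        = ((complex_of_real d)\<^sup>2 * (cos p)\<^sup>2 + (complex_of_real c)\<^sup>2) * (cos q)\<^sup>2"
      using cos_prod by (simp add: algebra_simps flip: power_mult_distrib)
    with quartic have "(complex_of_real d)\<^sup>2 + (complex_of_real c)\<^sup>2 * (cos q)\<^sup>2 = 0"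
      by simp
    with quartic \<open>c \<noteq> 0\<close> \<open>d \<noteq> 0\<close>
    have "(cos p)\<^sup>2 = complex_of_real (- (c / d)\<^sup>2)"
      and "(cos q)\<^sup>2 = complex_of_real (- (d / c)\<^sup>2)"
      by (simp_all add: field_simps eq_neg_iff_add_eq_0 add.commute)
    with assms \<open>c \<noteq> 0\<close> \<open>d \<noteq> 0\<close> show False
      using weighted_sum_nonzero_if_cos_squares_negative[of kappa c d] by auto
  qed
qed

text \<open>Half-angle substitution: with \<open>u = c + d\<close>, \<open>w = c - d\<close> the two sums become
  products of functions of \<open>p = kappa c\<close> and \<open>q = kappa d\<close>.\<close>

lemma cos_sum_as_product:
  fixes p q :: complex
  shows "cos (p + q) + cos (p - q) = 2 * cos p * cos q"
  by (simp add: cos_add cos_diff)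

lemma sin_weighted_sum_as_product:
  fixes p q c d :: complex
  shows "(c + d) * sin (p + q) + (c - d) * sin (p - q)
       = 2 * (c * sin p * cos q + d * cos p * sin q)"
  by (simp add: sin_add sin_diff algebra_simps)

theorem mainTheorem4:
  fixes psi :: real and kappa :: complex
  assumes "0 \<le> psi" and "psi < 2 * pi"
    and "Im kappa \<noteq> 0"
    and "cos (kappa * complex_of_real (cos psi)) + cos (kappa * complex_of_real (sin psi)) - 2 = 0"
  shows "complex_of_real (cos psi) * sin (kappa * complex_of_real (cos psi))
       + complex_of_real (sin psi) * sin (kappa * complex_of_real (sin psi)) \<noteq> 0"
proof
  define c d where "c = (cos psi + sin psi) / 2" and "d = (cos psi - sin psi) / 2"
  define p q where "p = kappa * complex_of_real c" and "q = kappa * complex_of_real d"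
  have uw: "complex_of_real (cos psi) = of_real c + of_real d"
           "complex_of_real (sin psi) = of_real c - of_real d"
    by (simp_all add: c_def d_def field_simps)
  have angles: "kappa * complex_of_real (cos psi) = p + q"
               "kappa * complex_of_real (sin psi) = p - q"
    by (simp_all add: uw p_def q_def algebra_simps)
  assume "complex_of_real (cos psi) * sin (kappa * complex_of_real (cos psi))
       + complex_of_real (sin psi) * sin (kappa * complex_of_real (sin psi)) = 0"
  then have "complex_of_real c * sin p * cos q + complex_of_real d * cos p * sin q = 0"
    unfolding angles unfolding uw sin_weighted_sum_as_product
    by (metis mult_eq_0_iff zero_neq_numeral)
  moreover have "cos p * cos q = 1"
    using assms(4) unfolding angles cos_sum_as_product by simp
  moreover have "c\<^sup>2 + d\<^sup>2 = 1 / 2"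
    using sin_cos_squared_add[of psi] by (simp add: c_def d_def power2_eq_square field_simps)
  then have "c \<noteq> 0 \<or> d \<noteq> 0" by auto
  ultimately show False
    using assms(3) no_common_solution[of kappa c d] by (simp add: p_def q_def)
qed

end
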